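(* Let $X$ be a compact locale with frame presentation $\mathcal{O}X=\langle G\mid R\rangle$ and quotient frame homomorphism $\overline{q}\colon\mathcal{O}(\Sigma^G)\to\mathcal{O}X$. Let $\mathcal{C}$ be the set of those finite sets $S$ of finite subsets of $G$ satisfying $\bigvee_{F\in S}\bigwedge_{g\in F}g=1$ in $\mathcal{O}X$. Then the open $\bigvee_{S\in\mathcal{C}}\bigwedge_{F\in S}{\boxtimes}F$ of the machine space $\Sigma^{\Sigma^G}$ (i.e. the Scott-open subset $\bigcup_{S\in\mathcal{C}}\bigcap_{F\in S}{\boxtimes}F$ of $\mathcal{O}(\Sigma^G)$) consists precisely of the machines $m\in\mathcal{O}(\Sigma^G)$ that cover $X$, i.e. those with $\overline{q}(m)=1$.
   Context: Frames are complete lattices with finite meets distributing over arbitrary joins; a locale $X$ is a frame $\mathcal{O}X$. A locale is compact if every cover $\bigvee_{i\in I}u_i=1$ has a finite subcover. For a set $G$, $\mathcal{O}(\Sigma^G)$ is the free frame on $G$ (elements, called machines, are formal joins of finite formal meets of generators), and the machine space $\Sigma^{\Sigma^G}$ is the locale given by the Scott topology on $\mathcal{O}(\Sigma^G)$. A presentation $\mathcal{O}X=\langle G\mid R\rangle$ means $\mathcal{O}X$ is the quotient of the free frame on $G$ by the congruence generated by $R$, with quotient map $\overline{q}$. For $U\subseteq G$, ${\boxtimes}U=\{m\in\mathcal{O}(\Sigma^G)\mid \exists\text{ finite }J\subseteq U\text{ with }\bigwedge_{g\in J}g\le m\}$, a Scott-open set. *)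

theory Defs
  imports Main
begin

definition is_frame :: "'x::complete_lattice itself \<Rightarrow> bool" where
  "is_frame _ \<longleftrightarrow> (\<forall>(a::'x) (B::'x set). inf a (Sup B) = (SUP b\<in>B. inf a b))"

definition compact_locale :: "'x::complete_lattice itself \<Rightarrow> bool" where
  "compact_locale _ \<longleftrightarrow>
     (\<forall>U::'x set. Sup U = top \<longrightarrow> (\<exists>V\<subseteq>U. finite V \<and> Sup V = top))"

text \<open>Formal finite meets of generators are finite subsets of G; an element of the free
  frame (a machine) is a formal join of formal finite meets, in normal form: a down-closed
  set of finite meets, i.e. a family of finite subsets of G closed upwards under inclusion.\<close>

definition fin_sub :: "'g set \<Rightarrow> 'g set set" where
  "fin_sub G = {F. finite F \<and> F \<subseteq> G}"

definition free_frame :: "'g set \<Rightarrow> 'g set set set" where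
  "free_frame G = {m. m \<subseteq> fin_sub G \<and>
                     (\<forall>F\<in>m. \<forall>F'\<in>fin_sub G. F \<subseteq> F' \<longrightarrow> F' \<in> m)}"

text \<open>Order = inclusion, joins = unions, binary meets = intersections, top = fin_sub G.\<close>

definition gen :: "'g set \<Rightarrow> 'g \<Rightarrow> 'g set set" where
  "gen G g = {F\<in>fin_sub G. g \<in> F}"

definition ff_meet :: "'g set \<Rightarrow> 'g set \<Rightarrow> 'g set set" where
  "ff_meet G J = fin_sub G \<inter> \<Inter>(gen G ` J)"

definition boxtimes :: "'g set \<Rightarrow> 'g set \<Rightarrow> 'g set set set" where
  "boxtimes G U = {m\<in>free_frame G. \<exists>J. finite J \<and> J \<subseteq> U \<and> ff_meet G J \<subseteq> m}"

definition ff_hom :: "'g set \<Rightarrow> ('g set set \<Rightarrow> 'x::complete_lattice) \<Rightarrow> bool" where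
  "ff_hom G q \<longleftrightarrow>
     (\<forall>A\<subseteq>free_frame G. q (\<Union>A) = Sup (q ` A)) \<and>
     (\<forall>a\<in>free_frame G. \<forall>b\<in>free_frame G. q (a \<inter> b) = inf (q a) (q b)) \<and>
     q (fin_sub G) = top"

inductive_set frame_cong :: "'g set \<Rightarrow> ('g set set \<times> 'g set set) set
                               \<Rightarrow> ('g set set \<times> 'g set set) set"
  for G R where
  cong_refl: "a \<in> free_frame G \<Longrightarrow> (a, a) \<in> frame_cong G R"
| cong_base: "(a, b) \<in> R \<Longrightarrow> (a, b) \<in> frame_cong G R"
| cong_sym: "(a, b) \<in> frame_cong G R \<Longrightarrow> (b, a) \<in> frame_cong G R"
| cong_trans: "(a, b) \<in> frame_cong G R \<Longrightarrow> (b, c) \<in> frame_cong G R \<Longrightarrow> (a, c) \<in> frame_cong G R"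
| cong_meet: "(a, b) \<in> frame_cong G R \<Longrightarrow> (c, d) \<in> frame_cong G R
               \<Longrightarrow> (a \<inter> c, b \<inter> d) \<in> frame_cong G R"
| cong_join: "(\<And>p. p \<in> P \<Longrightarrow> p \<in> frame_cong G R) \<Longrightarrow> (\<Union>(fst ` P), \<Union>(snd ` P)) \<in> frame_cong G R"

definition presentation ::
  "'g set \<Rightarrow> ('g set set \<times> 'g set set) set \<Rightarrow> ('g set set \<Rightarrow> 'x::complete_lattice) \<Rightarrow> bool" where
  "presentation G R q \<longleftrightarrow>
     R \<subseteq> free_frame G \<times> free_frame G \<and>
     ff_hom G q \<and>
     q ` free_frame G = UNIV \<and>
     (\<forall>a\<in>free_frame G. \<forall>b\<in>free_frame G. q a = q b \<longleftrightarrow> (a, b) \<in> frame_cong G R)"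

end

theory Submission
  imports Defs
begin

text \<open>A machine \<open>m\<close> is the union of the basic opens \<open>ff_meet G F\<close> with \<open>F \<in> m\<close>, so a
  frame homomorphism sends it to the join over \<open>F \<in> m\<close> of the meets of the generators in \<open>F\<close>.
  If \<open>q m = \<top>\<close>, compactness picks finitely many such \<open>F\<close> already covering, and \<open>m\<close> lies in
  \<open>boxtimes G F\<close> for each of them. Conversely, \<open>m \<in> boxtimes G F\<close> bounds the meet of the
  generators in \<open>F\<close> by \<open>q m\<close>, so membership in all \<open>boxtimes G F\<close>, \<open>F \<in> S\<close>, for a cover \<open>S\<close>
  forces \<open>q m = \<top>\<close>.\<close>

lemma gen_in_free_frame: "gen G g \<in> free_frame G"
  unfolding gen_def free_frame_def fin_sub_def by auto

lemma ff_meet_in_free_frame: "ff_meet G J \<in> free_frame G"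
  unfolding ff_meet_def gen_def free_frame_def fin_sub_def by auto

lemma ff_meet_empty: "ff_meet G {} = fin_sub G"
  unfolding ff_meet_def by auto

lemma ff_meet_insert: "ff_meet G (insert g J) = gen G g \<inter> ff_meet G J"
  unfolding ff_meet_def gen_def by auto

lemma ff_meet_subset_free_frame:
  assumes "m \<in> free_frame G" and "F \<in> m"
  shows "ff_meet G F \<subseteq> m"
  using assms unfolding free_frame_def ff_meet_def gen_def by blast

lemma free_frame_eq_Union_ff_meet:
  assumes "m \<in> free_frame G"
  shows "m = \<Union>(ff_meet G ` m)"
proof
  show "m \<subseteq> \<Union>(ff_meet G ` m)"
  proof
    fix F assume "F \<in> m"
    with assms have "F \<in> ff_meet G F"
      unfolding free_frame_def ff_meet_def gen_def by auto
    with \<open>F \<in> m\<close> show "F \<in> \<Union>(ff_meet G ` m)" by blast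
  qed
  show "\<Union>(ff_meet G ` m) \<subseteq> m"
    using ff_meet_subset_free_frame[OF assms] by blast
qed

lemma mem_boxtimes_of_mem:
  assumes "m \<in> free_frame G" and "F \<in> m"
  shows "m \<in> boxtimes G F"
proof -
  have "finite F" using assms unfolding free_frame_def fin_sub_def by auto
  then show ?thesis
    using assms ff_meet_subset_free_frame unfolding boxtimes_def by blast
qed

lemma ff_hom_mono:
  assumes "ff_hom G q" and "a \<in> free_frame G" "b \<in> free_frame G" and "a \<subseteq> b"
  shows "q a \<le> q b"
proof -
  have "q a = q (a \<inter> b)" using \<open>a \<subseteq> b\<close> by (simp add: Int_absorb2)
  also have "\<dots> = inf (q a) (q b)" using assms(1-3) unfolding ff_hom_def by blast
  finally show ?thesis by (metis inf.orderI)
qed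

lemma ff_hom_ff_meet:
  assumes "ff_hom G q" and "finite J"
  shows "q (ff_meet G J) = (INF g\<in>J. q (gen G g))"
  using \<open>finite J\<close>
proof (induction J rule: finite_induct)
  case empty
  then show ?case using assms(1) by (simp add: ff_meet_empty ff_hom_def)
next
  case (insert g J)
  have "q (ff_meet G (insert g J)) = inf (q (gen G g)) (q (ff_meet G J))"
    using assms(1) gen_in_free_frame[of G g] ff_meet_in_free_frame[of G J]
    unfolding ff_hom_def by (simp add: ff_meet_insert)
  with insert show ?case by simp
qed

lemma ff_hom_eq_SUP_INF:
  assumes "ff_hom G q" and "m \<in> free_frame G"
  shows "q m = (SUP F\<in>m. INF g\<in>F. q (gen G g))"
proof -
  have fin: "\<And>F. F \<in> m \<Longrightarrow> finite F"
    using assms(2) unfolding free_frame_def fin_sub_def by auto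
  have "q m = q (\<Union>(ff_meet G ` m))"
    using free_frame_eq_Union_ff_meet[OF assms(2)] by simp
  also have "\<dots> = Sup (q ` ff_meet G ` m)"
    using assms(1) ff_meet_in_free_frame[of G] unfolding ff_hom_def by blast
  also have "\<dots> = (SUP F\<in>m. q (ff_meet G F))"
    by (simp add: image_image)
  also have "\<dots> = (SUP F\<in>m. INF g\<in>F. q (gen G g))"
    using ff_hom_ff_meet[OF assms(1) fin] by simp
  finally show ?thesis .
qed

lemma ff_hom_INF_le_of_mem_boxtimes:
  assumes "ff_hom G q" and "m \<in> boxtimes G F"
  shows "(INF g\<in>F. q (gen G g)) \<le> q m"
proof -
  obtain J where J: "finite J" "J \<subseteq> F" "ff_meet G J \<subseteq> m" and m: "m \<in> free_frame G"
    using assms(2) unfolding boxtimes_def by blast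
  have "(INF g\<in>F. q (gen G g)) \<le> (INF g\<in>J. q (gen G g))"
    using J(2) by (rule INF_superset_mono) simp
  also have "\<dots> = q (ff_meet G J)"
    using ff_hom_ff_meet[OF assms(1) J(1)] by simp
  also have "\<dots> \<le> q m"
    using ff_hom_mono[OF assms(1) ff_meet_in_free_frame m J(3)] .
  finally show ?thesis .
qed

lemma ff_hom_eq_top_of_boxtimes_cover:
  assumes "ff_hom G q" and "m \<in> free_frame G"
    and "(SUP F\<in>S. INF g\<in>F. q (gen G g)) = top"
    and "\<And>F. F \<in> S \<Longrightarrow> m \<in> boxtimes G F"
  shows "q m = top"
proof -
  have "(SUP F\<in>S. INF g\<in>F. q (gen G g)) \<le> q m"
    using ff_hom_INF_le_of_mem_boxtimes[OF assms(1) assms(4)] by (rule SUP_least)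
  with assms(3) show ?thesis by (simp add: top_le)
qed

lemma ff_hom_eq_top_finite_cover:
  assumes "compact_locale TYPE('x::complete_lattice)"
    and "ff_hom G (q :: 'g set set \<Rightarrow> 'x)" and "m \<in> free_frame G" and "q m = top"
  obtains S where "finite S" "S \<subseteq> m" "(SUP F\<in>S. INF g\<in>F. q (gen G g)) = top"
proof -
  let ?b = "\<lambda>F. INF g\<in>F. q (gen G g)"
  have "Sup (?b ` m) = top"
    using assms(4) ff_hom_eq_SUP_INF[OF assms(2,3)] by simp
  then obtain V where "V \<subseteq> ?b ` m" "finite V" "Sup V = top"
    using assms(1) unfolding compact_locale_def by blast
  then obtain S where "S \<subseteq> m" "finite S" "V = ?b ` S"
    by (meson finite_subset_image)
  with \<open>Sup V = top\<close> show thesis using that by simp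
qed

theorem corollary4p2:
  fixes G :: "'g set"
    and R :: "('g set set \<times> 'g set set) set"
    and q :: "'g set set \<Rightarrow> 'x::complete_lattice"
  assumes "is_frame TYPE('x)"
    and "compact_locale TYPE('x)"
    and "presentation G R q"
  shows "(\<Union>S\<in>{S. finite S \<and> S \<subseteq> fin_sub G \<and>
                   (SUP F\<in>S. INF g\<in>F. q (gen G g)) = top}.
            free_frame G \<inter> (\<Inter>F\<in>S. boxtimes G F))
         = {m\<in>free_frame G. q m = top}" (is "?L = ?R")
proof
  have hom: "ff_hom G q" using assms(3) unfolding presentation_def by blast
  show "?L \<subseteq> ?R"
    using ff_hom_eq_top_of_boxtimes_cover[OF hom] by blast
  show "?R \<subseteq> ?L"
  proof
    fix m assume "m \<in> ?R"
    then have m: "m \<in> free_frame G" "q m = top" by auto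
    then obtain S where S: "finite S" "S \<subseteq> m" "(SUP F\<in>S. INF g\<in>F. q (gen G g)) = top"
      using ff_hom_eq_top_finite_cover[OF assms(2) hom] by blast
    have "S \<subseteq> fin_sub G" using S(2) m(1) unfolding free_frame_def by auto
    moreover have "m \<in> boxtimes G F" if "F \<in> S" for F
      using mem_boxtimes_of_mem[OF m(1)] S(2) that by blast
    ultimately show "m \<in> ?L" using S(1,3) m(1) by blast
  qed
qed

end
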